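(* Let $G$ be a finite undirected graph and $\tau\ge1$, $k$ integers. Then the $(k+1,\tau)$-truss of $G$ is contained in the $(k,\tau)$-truss of $G$.
   Context: Graphs are finite, simple, undirected and unweighted; paths may repeat vertices and their length is the number of edges. For vertices $v,u$ of a graph $H$, $u$ is $\tau$-hop reachable from $v$ in $H$ if there is a path between them in $H$ of length at most $\tau$. $N_\tau(v,H)$ is the set of vertices $u\ne v$ that are $\tau$-hop reachable from $v$ in $H$. For an edge $e=(u,v)$ of $H$, $\Delta_\tau(e,H)=N_\tau(u,H)\cap N_\tau(v,H)$ and $\mathrm{sup}_\tau(e,H)=|\Delta_\tau(e,H)|$. The $(k,\tau)$-truss of $G$ is the maximal subgraph $G'$ of $G$ such that $\mathrm{sup}_\tau(e,G')\ge k-2$ for every edge $e\in E(G')$ (supports computed inside $G'$) and no more edges of $G$ can be added while keeping this property; a subgraph is determined by its edge set. *)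

theory Defs
  imports Main
begin

definition simple_graph :: "'a set \<Rightarrow> 'a set set \<Rightarrow> bool" where
  "simple_graph V E \<longleftrightarrow> finite V \<and> (\<forall>e\<in>E. \<exists>u v. u \<in> V \<and> v \<in> V \<and> u \<noteq> v \<and> e = {u, v})"

definition is_walk :: "'a set set \<Rightarrow> 'a list \<Rightarrow> bool" where
  "is_walk F xs \<longleftrightarrow> xs \<noteq> [] \<and> (\<forall>i. Suc i < length xs \<longrightarrow> {xs ! i, xs ! Suc i} \<in> F)"

definition hop_reachable :: "'a set set \<Rightarrow> nat \<Rightarrow> 'a \<Rightarrow> 'a \<Rightarrow> bool" where
  "hop_reachable F \<tau> v u \<longleftrightarrow>
     (\<exists>xs. is_walk F xs \<and> hd xs = v \<and> last xs = u \<and> length xs - 1 \<le> \<tau>)"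

definition hop_nbhd :: "'a set set \<Rightarrow> nat \<Rightarrow> 'a \<Rightarrow> 'a set" where
  "hop_nbhd F \<tau> v = {u. u \<noteq> v \<and> hop_reachable F \<tau> v u}"

definition hop_support :: "'a set set \<Rightarrow> nat \<Rightarrow> 'a \<Rightarrow> 'a \<Rightarrow> nat" where
  "hop_support F \<tau> u v = card (hop_nbhd F \<tau> u \<inter> hop_nbhd F \<tau> v)"

definition truss_valid :: "'a set set \<Rightarrow> int \<Rightarrow> nat \<Rightarrow> bool" where
  "truss_valid F k \<tau> \<longleftrightarrow>
     (\<forall>u v. {u, v} \<in> F \<longrightarrow> u \<noteq> v \<longrightarrow> int (hop_support F \<tau> u v) \<ge> k - 2)"

definition is_k_tau_truss :: "'a set \<Rightarrow> 'a set set \<Rightarrow> int \<Rightarrow> nat \<Rightarrow> 'a set set \<Rightarrow> bool" where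
  "is_k_tau_truss V E k \<tau> F \<longleftrightarrow>
     F \<subseteq> E \<and> truss_valid F k \<tau> \<and>
     (\<forall>F'. F \<subset> F' \<and> F' \<subseteq> E \<longrightarrow> \<not> truss_valid F' k \<tau>)"

end

theory Submission
  imports Defs
begin

text \<open>Supports can only grow when edges are added, so the union of two subgraphs that are
  valid for k is again valid for k. Hence the (k,\<tau>)-truss is the greatest valid subgraph,
  and it contains the (k+1,\<tau>)-truss, which is in particular valid for k.\<close>

lemma is_walk_mono: "is_walk F xs \<Longrightarrow> F \<subseteq> F' \<Longrightarrow> is_walk F' xs"
  unfolding is_walk_def by blast

lemma hop_reachable_mono: "hop_reachable F \<tau> v u \<Longrightarrow> F \<subseteq> F' \<Longrightarrow> hop_reachable F' \<tau> v u"
  unfolding hop_reachable_def by (metis is_walk_mono)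

lemma hop_nbhd_mono: "F \<subseteq> F' \<Longrightarrow> hop_nbhd F \<tau> v \<subseteq> hop_nbhd F' \<tau> v"
  unfolding hop_nbhd_def by (auto intro: hop_reachable_mono)

lemma hop_nbhd_subset_Union: "hop_nbhd F \<tau> v \<subseteq> \<Union>F"
proof
  fix u assume "u \<in> hop_nbhd F \<tau> v"
  then obtain xs where walk: "is_walk F xs" and "hd xs = v" "last xs = u" "u \<noteq> v"
    unfolding hop_nbhd_def hop_reachable_def by blast
  moreover have "xs \<noteq> []"
    using walk unfolding is_walk_def by simp
  ultimately obtain n where n: "length xs = Suc (Suc n)"
    by (cases xs rule: remdups_adj.cases) auto
  then have "{xs ! n, xs ! Suc n} \<in> F"
    using walk unfolding is_walk_def by simp
  moreover have "xs ! Suc n = u"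
    using \<open>last xs = u\<close> \<open>xs \<noteq> []\<close> n by (simp add: last_conv_nth)
  ultimately show "u \<in> \<Union>F" by blast
qed

lemma simple_graph_finite_Union:
  assumes "simple_graph V E" and "F \<subseteq> E"
  shows "finite (\<Union>F)"
proof (rule finite_subset)
  show "\<Union>F \<subseteq> V"
    using assms unfolding simple_graph_def by fastforce
  show "finite V"
    using assms(1) unfolding simple_graph_def by simp
qed

lemma hop_support_mono:
  assumes "F \<subseteq> F'" and "finite (\<Union>F')"
  shows "hop_support F \<tau> u v \<le> hop_support F' \<tau> u v"
proof -
  have "finite (hop_nbhd F' \<tau> u)"
    using hop_nbhd_subset_Union assms(2) by (rule finite_subset)
  moreover have "hop_nbhd F \<tau> u \<inter> hop_nbhd F \<tau> v \<subseteq> hop_nbhd F' \<tau> u \<inter> hop_nbhd F' \<tau> v"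
    using hop_nbhd_mono[OF assms(1)] by blast
  ultimately show ?thesis
    unfolding hop_support_def by (simp add: card_mono)
qed

lemma truss_valid_antimono:
  "truss_valid F k' \<tau> \<Longrightarrow> k \<le> k' \<Longrightarrow> truss_valid F k \<tau>"
  unfolding truss_valid_def by force

lemma truss_valid_Un:
  assumes "finite (\<Union>(F \<union> F'))" and "truss_valid F k \<tau>" and "truss_valid F' k \<tau>"
  shows "truss_valid (F \<union> F') k \<tau>"
  unfolding truss_valid_def
proof (intro allI impI)
  fix u v assume "{u, v} \<in> F \<union> F'" "u \<noteq> v"
  moreover have "hop_support F \<tau> u v \<le> hop_support (F \<union> F') \<tau> u v"
    and "hop_support F' \<tau> u v \<le> hop_support (F \<union> F') \<tau> u v"
    using assms(1) by (auto intro: hop_support_mono)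
  ultimately show "k - 2 \<le> int (hop_support (F \<union> F') \<tau> u v)"
    using assms(2,3) unfolding truss_valid_def by force
qed

lemma k_tau_truss_greatest:
  assumes "simple_graph V E" and "is_k_tau_truss V E k \<tau> T"
    and "F \<subseteq> E" and "truss_valid F k \<tau>"
  shows "F \<subseteq> T"
proof (rule ccontr)
  assume "\<not> F \<subseteq> T"
  then have "T \<subset> F \<union> T" by blast
  moreover have "F \<union> T \<subseteq> E"
    using assms(2,3) unfolding is_k_tau_truss_def by blast
  moreover have "finite (\<Union>(F \<union> T))"
    using simple_graph_finite_Union[OF assms(1) \<open>F \<union> T \<subseteq> E\<close>] .
  moreover have "truss_valid T k \<tau>"
    using assms(2) unfolding is_k_tau_truss_def by simp
  ultimately have "truss_valid (F \<union> T) k \<tau>"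
    using truss_valid_Un assms(4) by blast
  with \<open>T \<subset> F \<union> T\<close> \<open>F \<union> T \<subseteq> E\<close> show False
    using assms(2) unfolding is_k_tau_truss_def by blast
qed

theorem lemma1:
  fixes V :: "'a set" and E :: "'a set set" and k :: int and \<tau> :: nat
  assumes "simple_graph V E"
    and "\<tau> \<ge> 1"
    and "is_k_tau_truss V E (k + 1) \<tau> T1"
    and "is_k_tau_truss V E k \<tau> T2"
  shows "T1 \<subseteq> T2"
proof (rule k_tau_truss_greatest[OF assms(1,4)])
  show "T1 \<subseteq> E" and "truss_valid T1 k \<tau>"
    using assms(3) truss_valid_antimono[of T1 "k + 1" \<tau> k]
    unfolding is_k_tau_truss_def by auto
qed

end
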